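(* Let $\mathfrak{g}$ be a finite-dimensional complex Lie algebra and let $x\cdot y=[\phi(x),y]$ be a nil-inner CPA-structure on $\mathfrak{g}$, where $\phi:\mathfrak{g}\to\mathfrak{g}$ is a nilpotent Lie algebra homomorphism. Then $\phi(\mathfrak{g})\subseteq\mathrm{nil}(\mathfrak{g})$ and $\mathrm{fix}(\mathfrak{g})\subseteq\ker(\phi)$.
   Context: A CPA-structure on $\mathfrak{g}$ is a bilinear product $x\cdot y$ satisfying, for all $x,y,z$: $x\cdot y=y\cdot x$; $[x,y]\cdot z=x\cdot(y\cdot z)-y\cdot(x\cdot z)$; $x\cdot[y,z]=[x\cdot y,z]+[y,x\cdot z]$. $\mathrm{nil}(\mathfrak{g})$ is the nilradical of $\mathfrak{g}$. $\mathrm{fix}(\mathfrak{g})$ is the Lie ideal of $\mathfrak{g}$ generated by $\{x\in\mathfrak{g}\mid\mathrm{ad}(y)x=x\text{ for some }y\in\mathfrak{g}\}$. *)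

theory Defs
  imports Main "HOL-Analysis.Analysis"
begin

text \<open>A complex vector space is modelled by a type 'g of class ab_group_add
together with a scalar multiplication smul :: complex => 'g => 'g satisfying
the vector_space axioms (HOL Vector_Spaces).\<close>

definition fin_dim :: "(complex \<Rightarrow> 'g::ab_group_add \<Rightarrow> 'g) \<Rightarrow> bool" where
  "fin_dim smul \<longleftrightarrow> (\<exists>B. finite B \<and> module.span smul B = UNIV)"

definition lie_algebra :: "(complex \<Rightarrow> 'g::ab_group_add \<Rightarrow> 'g) \<Rightarrow> ('g \<Rightarrow> 'g \<Rightarrow> 'g) \<Rightarrow> bool" where
  "lie_algebra smul br \<longleftrightarrow>
     vector_space smul \<and>
     (\<forall>x. Vector_Spaces.linear smul smul (br x)) \<and>
     (\<forall>y. Vector_Spaces.linear smul smul (\<lambda>x. br x y)) \<and>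
     (\<forall>x. br x x = 0) \<and>
     (\<forall>x y z. br x (br y z) + br y (br z x) + br z (br x y) = 0)"

definition lie_hom :: "(complex \<Rightarrow> 'g::ab_group_add \<Rightarrow> 'g) \<Rightarrow> ('g \<Rightarrow> 'g \<Rightarrow> 'g) \<Rightarrow> ('g \<Rightarrow> 'g) \<Rightarrow> bool" where
  "lie_hom smul br \<phi> \<longleftrightarrow>
     Vector_Spaces.linear smul smul \<phi> \<and> (\<forall>x y. \<phi> (br x y) = br (\<phi> x) (\<phi> y))"

definition nilpotent_map :: "('g::zero \<Rightarrow> 'g) \<Rightarrow> bool" where
  "nilpotent_map \<phi> \<longleftrightarrow> (\<exists>n. (\<phi> ^^ n) = (\<lambda>_. 0))"

definition cpa_structure :: "(complex \<Rightarrow> 'g::ab_group_add \<Rightarrow> 'g) \<Rightarrow> ('g \<Rightarrow> 'g \<Rightarrow> 'g) \<Rightarrow> ('g \<Rightarrow> 'g \<Rightarrow> 'g) \<Rightarrow> bool" where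
  "cpa_structure smul br cpa_mult \<longleftrightarrow>
     (\<forall>x. Vector_Spaces.linear smul smul (cpa_mult x)) \<and>
     (\<forall>y. Vector_Spaces.linear smul smul (\<lambda>x. cpa_mult x y)) \<and>
     (\<forall>x y. cpa_mult x y = cpa_mult y x) \<and>
     (\<forall>x y z. cpa_mult (br x y) z = cpa_mult x (cpa_mult y z) - cpa_mult y (cpa_mult x z)) \<and>
     (\<forall>x y z. cpa_mult x (br y z) = br (cpa_mult x y) z + br y (cpa_mult x z))"

definition lie_ideal :: "(complex \<Rightarrow> 'g::ab_group_add \<Rightarrow> 'g) \<Rightarrow> ('g \<Rightarrow> 'g \<Rightarrow> 'g) \<Rightarrow> 'g set \<Rightarrow> bool" where
  "lie_ideal smul br I \<longleftrightarrow> module.subspace smul I \<and> (\<forall>x y. y \<in> I \<longrightarrow> br x y \<in> I)"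

fun lcs :: "(complex \<Rightarrow> 'g::ab_group_add \<Rightarrow> 'g) \<Rightarrow> ('g \<Rightarrow> 'g \<Rightarrow> 'g) \<Rightarrow> 'g set \<Rightarrow> nat \<Rightarrow> 'g set" where
  "lcs smul br I 0 = I"
| "lcs smul br I (Suc k) = module.span smul {br x y | x y. x \<in> I \<and> y \<in> lcs smul br I k}"

definition nilpotent_ideal :: "(complex \<Rightarrow> 'g::ab_group_add \<Rightarrow> 'g) \<Rightarrow> ('g \<Rightarrow> 'g \<Rightarrow> 'g) \<Rightarrow> 'g set \<Rightarrow> bool" where
  "nilpotent_ideal smul br I \<longleftrightarrow> lie_ideal smul br I \<and> (\<exists>k. lcs smul br I k = {0})"

definition nilradical :: "(complex \<Rightarrow> 'g::ab_group_add \<Rightarrow> 'g) \<Rightarrow> ('g \<Rightarrow> 'g \<Rightarrow> 'g) \<Rightarrow> 'g set" where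
  "nilradical smul br = module.span smul (\<Union> {I. nilpotent_ideal smul br I})"

definition fix_ideal :: "(complex \<Rightarrow> 'g::ab_group_add \<Rightarrow> 'g) \<Rightarrow> ('g \<Rightarrow> 'g \<Rightarrow> 'g) \<Rightarrow> 'g set" where
  "fix_ideal smul br = \<Inter> {I. lie_ideal smul br I \<and> {x. \<exists>y. br y x = x} \<subseteq> I}"

end

theory Submission
  imports Defs
begin

text \<open>Commutativity of x \<cdot> y = [phi x, y] gives phi [y, w] = [phi y, phi w] = - [y, phi (phi w)].
  Hence the Lie ideals I k = power_ideal k generated by the image of phi^k satisfy phi (I k) \<subseteq> I (k + 1) and
  [I 1, I k] \<subseteq> I (k + 1), while I n = 0 once phi^n = 0. So I 1 is a nilpotent ideal
  containing the image of phi. If [y, x] = x, then phi x = [phi y, phi x] lies in every I k,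
  so phi x = 0; since the kernel of phi is an ideal, it contains fix(g).\<close>

locale inner_cpa =
  fixes smul :: "complex \<Rightarrow> 'g::ab_group_add \<Rightarrow> 'g"
    and br :: "'g \<Rightarrow> 'g \<Rightarrow> 'g"
    and phi :: "'g \<Rightarrow> 'g"
  assumes lie: "lie_algebra smul br"
    and hom: "lie_hom smul br phi"
    and cpa: "cpa_structure smul br (\<lambda>x y. br (phi x) y)"
begin

sublocale vector_space smul
  using lie by (simp add: lie_algebra_def)

lemma module_hom_bracket_left: "module_hom smul smul (\<lambda>x. br x c)"
  using lie by (simp add: lie_algebra_def linear_iff_module_hom)

lemma module_hom_bracket_right: "module_hom smul smul (br c)"
  using lie by (simp add: lie_algebra_def linear_iff_module_hom)

lemmas bracket_add_left = module_hom.add[OF module_hom_bracket_left]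
  and bracket_scale_left = module_hom.scale[OF module_hom_bracket_left]
  and bracket_zero_left [simp] = module_hom.zero[OF module_hom_bracket_left]
  and bracket_add_right = module_hom.add[OF module_hom_bracket_right]
  and bracket_neg_right = module_hom.neg[OF module_hom_bracket_right]
  and bracket_zero_right [simp] = module_hom.zero[OF module_hom_bracket_right]

lemma bracket_self [simp]: "br a a = 0"
  using lie by (simp add: lie_algebra_def)

lemma bracket_anticomm: "br a b = - br b a"
proof -
  have "0 = br (a + b) (a + b)"
    by simp
  also have "\<dots> = br a b + br b a"
    by (simp only: bracket_add_left bracket_add_right) (simp add: add.commute)
  finally show ?thesis
    by (metis eq_neg_iff_add_eq_0)
qed

lemma bracket_bracket_left: "br (br y u) v = br y (br u v) - br u (br y v)"
proof -
  have "br y (br u v) + br u (br v y) + br v (br y u) = 0"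
    using lie by (simp add: lie_algebra_def)
  then show ?thesis
    using bracket_anticomm[of v "br y u"] bracket_anticomm[of v y] bracket_neg_right
    by (simp add: algebra_simps eq_neg_iff_add_eq_0)
qed

lemma module_hom_phi: "module_hom smul smul phi"
  using hom by (simp add: lie_hom_def linear_iff_module_hom)

lemma phi_bracket: "phi (br a b) = br (phi a) (phi b)"
  using hom by (simp add: lie_hom_def)

lemma module_hom_funpow_phi: "module_hom smul smul (phi ^^ j)"
proof (induction j)
  case 0
  show ?case
    using module_hom_ident by (simp add: id_def linear_iff_module_hom)
next
  case (Suc j)
  show ?case
    using module_hom_compose[OF Suc module_hom_phi] by (simp add: comp_def)
qed

lemma phi_bracket_comm: "br (phi a) b = br (phi b) a"
  using cpa by (simp add: cpa_structure_def)

lemma phi_bracket_eq: "phi (br y w) = - br y (phi (phi w))"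
  using phi_bracket[of y w] phi_bracket_comm[of y "phi w"] bracket_anticomm[of "phi (phi w)" y]
  by simp

lemma funpow_phi_bracket:
  "(phi ^^ j) (br y v) = br y ((phi ^^ (2 * j)) v) \<or> (phi ^^ j) (br y v) = - br y ((phi ^^ (2 * j)) v)"
proof (induction j)
  case (Suc j)
  have "(phi ^^ Suc j) (br y v) = phi ((phi ^^ j) (br y v))"
    and "(phi ^^ (2 * Suc j)) v = phi (phi ((phi ^^ (2 * j)) v))"
    by simp_all
  with Suc show ?case
    using phi_bracket_eq module_hom.neg[OF module_hom_phi] by auto
qed simp

inductive_set power_ideal :: "nat \<Rightarrow> 'g set" for k :: nat where
  image: "(phi ^^ k) x \<in> power_ideal k"
| zero: "0 \<in> power_ideal k"
| add: "u \<in> power_ideal k \<Longrightarrow> v \<in> power_ideal k \<Longrightarrow> u + v \<in> power_ideal k"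
| scale: "u \<in> power_ideal k \<Longrightarrow> smul c u \<in> power_ideal k"
| bracket: "v \<in> power_ideal k \<Longrightarrow> br y v \<in> power_ideal k"

lemma power_ideal_neg: "u \<in> power_ideal k \<Longrightarrow> - u \<in> power_ideal k"
  using power_ideal.scale[of u k "-1"] by simp

lemma lie_ideal_power_ideal: "lie_ideal smul br (power_ideal k)"
  unfolding lie_ideal_def subspace_def by (auto intro: power_ideal.intros)

lemma phi_in_power_ideal_1: "phi x \<in> power_ideal 1"
  using power_ideal.image[of 1 x] by simp

lemma power_ideal_antimono: "v \<in> power_ideal l \<Longrightarrow> k \<le> l \<Longrightarrow> v \<in> power_ideal k"
proof (induction rule: power_ideal.induct)
  case (image x)
  then have "(phi ^^ l) x = (phi ^^ k) ((phi ^^ (l - k)) x)"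
    by (metis funpow_add le_add_diff_inverse comp_apply)
  then show ?case
    by (simp add: power_ideal.image)
qed (auto intro: power_ideal.intros)

lemma funpow_phi_power_ideal: "v \<in> power_ideal k \<Longrightarrow> (phi ^^ j) v \<in> power_ideal (k + j)"
proof (induction arbitrary: j rule: power_ideal.induct)
  case (image x)
  then show ?case
    using power_ideal.image[of "k + j" x] by (simp add: funpow_add add.commute)
next
  case (bracket v y)
  have "(phi ^^ (2 * j)) v \<in> power_ideal (k + j)"
    using bracket.IH by (rule power_ideal_antimono) simp
  then have "br y ((phi ^^ (2 * j)) v) \<in> power_ideal (k + j)"
    by (rule power_ideal.bracket)
  then show ?case
    using funpow_phi_bracket[of j y v] power_ideal_neg by auto
qed (simp_all add: module_hom.zero[OF module_hom_funpow_phi] module_hom.add[OF module_hom_funpow_phi]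
    module_hom.scale[OF module_hom_funpow_phi] power_ideal.zero power_ideal.add power_ideal.scale)

lemma bracket_power_ideal:
  "u \<in> power_ideal 1 \<Longrightarrow> v \<in> power_ideal k \<Longrightarrow> br u v \<in> power_ideal (Suc k)"
proof (induction arbitrary: k v rule: power_ideal.induct)
  case (image x)
  have "br ((phi ^^ 1) x) v = - br x (phi v)"
    using phi_bracket_comm[of x v] bracket_anticomm[of "phi v"] by simp
  moreover have "phi v \<in> power_ideal (Suc k)"
    using funpow_phi_power_ideal[OF image, of 1] by simp
  ultimately show ?case
    by (simp add: power_ideal.bracket power_ideal_neg)
next
  case (bracket u y)
  have "br y (br u v) \<in> power_ideal (Suc k)"
    using bracket by (simp add: power_ideal.bracket)
  moreover have "br u (br y v) \<in> power_ideal (Suc k)"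
    using bracket by (simp add: power_ideal.bracket)
  ultimately show ?case
    unfolding bracket_bracket_left diff_conv_add_uminus
    by (intro power_ideal.add power_ideal_neg)
qed (auto simp: bracket_add_left bracket_scale_left intro: power_ideal.intros)

lemma power_ideal_trivial:
  assumes "(phi ^^ n) = (\<lambda>_. 0)" and "n \<le> k"
  shows "power_ideal k = {0}"
proof -
  have "v = 0" if "v \<in> power_ideal n" for v
    using that by induction (simp_all add: assms(1))
  then show ?thesis
    using power_ideal_antimono[OF _ assms(2)] power_ideal.zero by blast
qed

lemma lcs_power_ideal_subset: "lcs smul br (power_ideal 1) k \<subseteq> power_ideal (Suc k)"
proof (induction k)
  case (Suc k)
  then have "{br x y | x y. x \<in> power_ideal 1 \<and> y \<in> lcs smul br (power_ideal 1) k}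
      \<subseteq> power_ideal (Suc (Suc k))"
    using bracket_power_ideal by blast
  then show ?case
    using span_minimal lie_ideal_power_ideal by (simp add: lie_ideal_def)
qed simp

lemma nilpotent_ideal_power_ideal:
  assumes "nilpotent_map phi"
  shows "nilpotent_ideal smul br (power_ideal 1)"
proof -
  obtain n where n: "(phi ^^ n) = (\<lambda>_. 0)"
    using assms by (auto simp: nilpotent_map_def)
  have "0 \<in> lcs smul br (power_ideal 1) n"
    by (cases n) (simp_all add: power_ideal.zero span_zero)
  then have "lcs smul br (power_ideal 1) n = {0}"
    using lcs_power_ideal_subset[of n] power_ideal_trivial[OF n] by auto
  then show ?thesis
    using lie_ideal_power_ideal by (auto simp: nilpotent_ideal_def)
qed

lemma range_phi_subset_nilradical:
  assumes "nilpotent_map phi"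
  shows "range phi \<subseteq> nilradical smul br"
proof -
  have "range phi \<subseteq> power_ideal 1"
    using phi_in_power_ideal_1 by blast
  also have "\<dots> \<subseteq> \<Union> {I. nilpotent_ideal smul br I}"
    using nilpotent_ideal_power_ideal[OF assms] by blast
  also have "\<dots> \<subseteq> nilradical smul br"
    unfolding nilradical_def by (rule span_superset)
  finally show ?thesis .
qed

lemma lie_ideal_kernel_phi: "lie_ideal smul br {x. phi x = 0}"
proof -
  interpret phi: module_hom smul smul phi
    by (rule module_hom_phi)
  show ?thesis
    by (simp add: lie_ideal_def subspace_def phi.add phi.scale phi_bracket)
qed

lemma phi_eq_0_if_bracket_fixed:
  assumes "nilpotent_map phi" and fixed: "br y x = x"
  shows "phi x = 0"
proof -
  obtain n where n: "(phi ^^ n) = (\<lambda>_. 0)"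
    using assms(1) by (auto simp: nilpotent_map_def)
  have phi_x: "phi x = br (phi y) (phi x)"
    using phi_bracket[of y x] fixed by simp
  have "phi x \<in> power_ideal (Suc k)" for k
  proof (induction k)
    case 0
    show ?case
      using phi_in_power_ideal_1 by simp
  next
    case (Suc k)
    then show ?case
      using bracket_power_ideal[OF phi_in_power_ideal_1] phi_x by metis
  qed
  then show ?thesis
    using power_ideal_trivial[OF n, of "Suc n"] by auto
qed

lemma fix_ideal_subset_kernel_phi:
  assumes "nilpotent_map phi"
  shows "fix_ideal smul br \<subseteq> {x. phi x = 0}"
  using lie_ideal_kernel_phi phi_eq_0_if_bracket_fixed[OF assms]
  unfolding fix_ideal_def by blast

end

theorem lemma4p6:
  fixes smul :: "complex \<Rightarrow> 'g::ab_group_add \<Rightarrow> 'g"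
    and br :: "'g \<Rightarrow> 'g \<Rightarrow> 'g"
    and \<phi> :: "'g \<Rightarrow> 'g"
  assumes "lie_algebra smul br"
    and "fin_dim smul"
    and "lie_hom smul br \<phi>"
    and "nilpotent_map \<phi>"
    and "cpa_structure smul br (\<lambda>x y. br (\<phi> x) y)"
  shows "range \<phi> \<subseteq> nilradical smul br \<and> fix_ideal smul br \<subseteq> {x. \<phi> x = 0}"
proof -
  interpret inner_cpa smul br \<phi>
    using assms(1,3,5) by unfold_locales
  show ?thesis
    using range_phi_subset_nilradical[OF assms(4)] fix_ideal_subset_kernel_phi[OF assms(4)]
    by blast
qed

end
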